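(* Let $T>0$ and let $l,r:[0,T]\times\mathbb{R}\to\mathbb{R}$ satisfy Assumption (A) below. Then for every $s\in C[0,T]$ and every $a\in\mathbb{R}$ with $l(T,a)\le 0\le r(T,a)$, the backward Skorokhod problem $\mathbb{BSP}_l^r(s,a)$ admits a unique solution $(x,k)\in C[0,T]\times BV[0,T]$.
   Context: $C[0,T]$ denotes the real continuous functions on $[0,T]$; $BV[0,T]$ the functions in $C[0,T]$ starting from $0$ with bounded variation; $I[0,T]$ the nondecreasing functions in $C[0,T]$ starting from $0$. Assumption (A) on $l,r:[0,T]\times\mathbb{R}\to\mathbb{R}$: (i) for each $x\in\mathbb{R}$, $l(\cdot,x),r(\cdot,x)\in C[0,T]$; (ii) for each $t\in[0,T]$, $l(t,\cdot)$ and $r(t,\cdot)$ are strictly increasing; (iii) there are constants $0<c<C<\infty$ such that for all $t\in[0,T]$, $x,y\in\mathbb{R}$: $c|x-y|\le|l(t,x)-l(t,y)|\le C|x-y|$ and $c|x-y|\le|r(t,x)-r(t,y)|\le C|x-y|$; (iv) $\inf_{(t,x)\in[0,T]\times\mathbb{R}}(r(t,x)-l(t,x))>0$. Backward Skorokhod problem: given $s\in C[0,T]$, $a\in\mathbb{R}$ with $l(T,a)\le0\le r(T,a)$, a pair $(x,k)\in C[0,T]\times BV[0,T]$ is a solution of $\mathbb{BSP}_l^r(s,a)$ if (i) $x_t=a+s_T-s_t+k_T-k_t$ for all $t\in[0,T]$; (ii) $l(t,x_t)\le 0\le r(t,x_t)$ for all $t\in[0,T]$; (iii) $k=k^r-k^l$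 with $k^r,k^l\in I[0,T]$ satisfying $\int_0^T \mathbf 1_{\{l(s,x_s)<0\}}\,dk^l_s=0$ and $\int_0^T \mathbf 1_{\{r(s,x_s)>0\}}\,dk^r_s=0$. *)

theory Defs
  imports "HOL-Analysis.Analysis"
begin

definition Cfun :: "real \<Rightarrow> (real \<Rightarrow> real) \<Rightarrow> bool" where
  "Cfun T f \<longleftrightarrow> continuous_on {0..T} f"

definition bounded_var :: "real \<Rightarrow> (real \<Rightarrow> real) \<Rightarrow> bool" where
  "bounded_var T f \<longleftrightarrow> (\<exists>B. \<forall>(ts :: nat \<Rightarrow> real) n.
     (0 \<le> ts 0 \<and> ts n \<le> T \<and> (\<forall>i<n. ts i \<le> ts (Suc i))) \<longrightarrow>
     (\<Sum>i<n. \<bar>f (ts (Suc i)) - f (ts i)\<bar>) \<le> B)"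

definition BVfun :: "real \<Rightarrow> (real \<Rightarrow> real) \<Rightarrow> bool" where
  "BVfun T f \<longleftrightarrow> Cfun T f \<and> f 0 = 0 \<and> bounded_var T f"

definition Ifun :: "real \<Rightarrow> (real \<Rightarrow> real) \<Rightarrow> bool" where
  "Ifun T f \<longleftrightarrow> Cfun T f \<and> f 0 = 0 \<and> mono_on {0..T} f"

definition LS_measure :: "real \<Rightarrow> (real \<Rightarrow> real) \<Rightarrow> real measure" where
  "LS_measure T f = interval_measure (\<lambda>u. f (max 0 (min T u)))"

definition assumptionA :: "real \<Rightarrow> (real \<Rightarrow> real \<Rightarrow> real) \<Rightarrow> (real \<Rightarrow> real \<Rightarrow> real) \<Rightarrow> bool" where
  "assumptionA T l r \<longleftrightarrow>
     (\<forall>x. continuous_on {0..T} (\<lambda>t. l t x) \<and> continuous_on {0..T} (\<lambda>t. r t x)) \<and>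
     (\<forall>t\<in>{0..T}. strict_mono (l t) \<and> strict_mono (r t)) \<and>
     (\<exists>c C. 0 < c \<and> c < C \<and> (\<forall>t\<in>{0..T}. \<forall>x y.
        c * \<bar>x - y\<bar> \<le> \<bar>l t x - l t y\<bar> \<and> \<bar>l t x - l t y\<bar> \<le> C * \<bar>x - y\<bar> \<and>
        c * \<bar>x - y\<bar> \<le> \<bar>r t x - r t y\<bar> \<and> \<bar>r t x - r t y\<bar> \<le> C * \<bar>x - y\<bar>)) \<and>
     (\<exists>\<delta>>0. \<forall>t\<in>{0..T}. \<forall>x. r t x - l t x \<ge> \<delta>)"

definition BSP_solution :: "real \<Rightarrow> (real \<Rightarrow> real \<Rightarrow> real) \<Rightarrow> (real \<Rightarrow> real \<Rightarrow> real) \<Rightarrow>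
    (real \<Rightarrow> real) \<Rightarrow> real \<Rightarrow> (real \<Rightarrow> real) \<Rightarrow> (real \<Rightarrow> real) \<Rightarrow> bool" where
  "BSP_solution T l r s a x k \<longleftrightarrow>
     Cfun T x \<and> BVfun T k \<and>
     (\<forall>t\<in>{0..T}. x t = a + s T - s t + k T - k t) \<and>
     (\<forall>t\<in>{0..T}. l t (x t) \<le> 0 \<and> 0 \<le> r t (x t)) \<and>
     (\<exists>kr kl. Ifun T kr \<and> Ifun T kl \<and> (\<forall>t\<in>{0..T}. k t = kr t - kl t) \<and>
        (\<integral>\<^sup>+ u. indicator {u\<in>{0..T}. l u (x u) < 0} u \<partial>LS_measure T kl) = 0 \<and>
        (\<integral>\<^sup>+ u. indicator {u\<in>{0..T}. r u (x u) > 0} u \<partial>LS_measure T kr) = 0)"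

end

theory Submission
  imports Defs
begin

text \<open>
  Writing lo t and hi t for the zeros of r t and l t, the constraint l t (x t) \<le> 0 \<le> r t (x t)
  says lo t \<le> x t \<le> hi t, and Assumption (A) makes lo and hi continuous with hi - lo bounded
  below by some \<eta> > 0. On a time cell so short that s, lo and hi oscillate by less than \<eta>/2,
  a path started in the lower half of the corridor can only reach the lower barrier, so the
  one-sided backward Skorokhod map (an explicit running supremum) solves the problem there;
  near the upper barrier one reflects the picture. Solutions on consecutive cells are
  concatenated backwards from T. The pushing processes are constant on every interval where
  the corresponding constraint is slack, which makes the contact sets null for their
  Lebesgue--Stieltjes measures. Uniqueness follows from a comparison argument: if x > x' on
  [t1, t0) with x t0 \<le> x' t0, then only k^l and k'^r can move there, and both push x - x' down.
\<close>

section \<open>Supremum over a terminal interval\<close>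

definition tail_sup :: "(real \<Rightarrow> real) \<Rightarrow> real \<Rightarrow> real \<Rightarrow> real" where
  "tail_sup g b t = Sup (g ` {t..b})"

lemma tail_sup_attained:
  assumes "continuous_on {a..b} g" "a \<le> t" "t \<le> b"
  obtains u where "u \<in> {t..b}" "tail_sup g b t = g u"
proof -
  have "continuous_on {t..b} g"
    using assms by (auto intro: continuous_on_subset)
  then obtain u where "u \<in> {t..b}" "\<forall>v\<in>{t..b}. g v \<le> g u"
    using continuous_attains_sup[of "{t..b}" g] assms by auto
  moreover from this have "tail_sup g b t = g u"
    unfolding tail_sup_def by (intro cSup_eq_maximum) auto
  ultimately show thesis using that by blast
qed

lemma tail_sup_upper:
  assumes "continuous_on {a..b} g" "a \<le> t" "t \<le> v" "v \<le> b"
  shows "g v \<le> tail_sup g b t"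
proof -
  have "compact (g ` {t..b})"
    using assms by (intro compact_continuous_image) (auto intro: continuous_on_subset)
  then have "bdd_above (g ` {t..b})"
    by (intro bounded_imp_bdd_above compact_imp_bounded)
  then show ?thesis
    unfolding tail_sup_def using assms(3,4) by (intro cSup_upper) auto
qed

lemma tail_sup_antimono:
  assumes "continuous_on {a..b} g" "a \<le> t" "t \<le> t'" "t' \<le> b"
  shows "tail_sup g b t' \<le> tail_sup g b t"
proof -
  obtain u where "u \<in> {t'..b}" "tail_sup g b t' = g u"
    using tail_sup_attained[OF assms(1), of t'] assms by auto
  then show ?thesis using tail_sup_upper[OF assms(1,2), of u] assms(3) by auto
qed

lemma tail_sup_end [simp]: "tail_sup g b b = g b"
  by (simp add: tail_sup_def)

lemma continuous_on_tail_sup: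
  assumes cont: "continuous_on {a..b} g"
  shows "continuous_on {a..b} (tail_sup g b)"
proof (rule uniformly_continuous_imp_continuous, unfold uniformly_continuous_on_def, intro allI impI)
  fix e :: real assume "e > 0"
  obtain d where "d > 0" and d: "\<And>x x'. x \<in> {a..b} \<Longrightarrow> x' \<in> {a..b} \<Longrightarrow> dist x' x < d \<Longrightarrow> dist (g x') (g x) < e/2"
    using compact_uniformly_continuous[OF cont] \<open>e > 0\<close>
    unfolding uniformly_continuous_on_def by (meson compact_Icc half_gt_zero)
  have close: "tail_sup g b t \<le> tail_sup g b t' + e/2"
    if "t \<in> {a..b}" "t' \<in> {a..b}" "t \<le> t'" "t' - t < d" for t t'
  proof -
    have "a \<le> t" "t \<le> b" using that by auto
    then obtain u where u: "u \<in> {t..b}" "tail_sup g b t = g u"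
      by (rule tail_sup_attained[OF cont])
    show ?thesis
    proof (cases "t' \<le> u")
      case True
      then show ?thesis using tail_sup_upper[OF cont, of t' u] u that \<open>e > 0\<close> by auto
    next
      case False
      then have "dist (g u) (g t') < e/2"
        using d[of t' u] u that by (auto simp: dist_real_def)
      then have "g u < g t' + e/2"
        unfolding dist_real_def by linarith
      moreover have "g t' \<le> tail_sup g b t'"
        using tail_sup_upper[OF cont, of t' t'] that by auto
      ultimately show ?thesis using u by simp
    qed
  qed
  show "\<exists>d>0. \<forall>x\<in>{a..b}. \<forall>x'\<in>{a..b}. dist x' x < d \<longrightarrow> dist (tail_sup g b x') (tail_sup g b x) < e"
  proof (intro exI[of _ d] conjI ballI impI)
    fix x x' assume xs: "x \<in> {a..b}" "x' \<in> {a..b}" "dist x' x < d"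
    show "dist (tail_sup g b x') (tail_sup g b x) < e"
    proof (cases "x \<le> x'")
      case True
      then show ?thesis using close[of x x'] tail_sup_antimono[OF cont, of x x'] xs \<open>e > 0\<close>
        by (auto simp: dist_real_def)
    next
      case False
      then show ?thesis using close[of x' x] tail_sup_antimono[OF cont, of x' x] xs \<open>e > 0\<close>
        by (auto simp: dist_real_def)
    qed
  qed (use \<open>d > 0\<close> in auto)
qed

section \<open>Backward reflection between two moving barriers\<close>

definition flat_where :: "(real \<Rightarrow> bool) \<Rightarrow> real \<Rightarrow> real \<Rightarrow> (real \<Rightarrow> real) \<Rightarrow> bool" where
  "flat_where P \<tau> \<tau>1 F \<longleftrightarrow>
     (\<forall>\<alpha> \<beta>. \<tau> \<le> \<alpha> \<longrightarrow> \<alpha> \<le> \<beta> \<longrightarrow> \<beta> \<le> \<tau>1 \<longrightarrow> (\<forall>u\<in>{\<alpha>..\<beta>}. P u) \<longrightarrow> F \<alpha> = F \<beta>)"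

lemma flat_whereI:
  assumes "\<And>\<alpha> \<beta>. \<tau> \<le> \<alpha> \<Longrightarrow> \<alpha> \<le> \<beta> \<Longrightarrow> \<beta> \<le> \<tau>1 \<Longrightarrow> (\<And>u. \<alpha> \<le> u \<Longrightarrow> u \<le> \<beta> \<Longrightarrow> P u) \<Longrightarrow> F \<alpha> = F \<beta>"
  shows "flat_where P \<tau> \<tau>1 F"
  using assms by (auto simp: flat_where_def)

lemma flat_whereD:
  assumes "flat_where P \<tau> \<tau>1 F" "\<tau> \<le> \<alpha>" "\<alpha> \<le> \<beta>" "\<beta> \<le> \<tau>1" "\<And>u. \<alpha> \<le> u \<Longrightarrow> u \<le> \<beta> \<Longrightarrow> P u"
  shows "F \<alpha> = F \<beta>"
  using assms by (auto simp: flat_where_def)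

lemma flat_where_concat:
  assumes left: "flat_where (\<lambda>u. P (x' u) u) \<tau> \<tau>1 F'" and right: "flat_where (\<lambda>u. P (x u) u) \<tau>1 \<tau>2 F"
    and "x' \<tau>1 = x \<tau>1" "F' \<tau>1 = 0"
  shows "flat_where (\<lambda>u. P (if \<tau>1 \<le> u then x u else x' u) u) \<tau> \<tau>2
    (\<lambda>t. if \<tau>1 \<le> t then F t else F \<tau>1 + F' t)"
proof (rule flat_whereI)
  fix \<alpha> \<beta> assume \<alpha>\<beta>: "\<tau> \<le> \<alpha>" "\<alpha> \<le> \<beta>" "\<beta> \<le> \<tau>2"
    and P: "\<And>u. \<alpha> \<le> u \<Longrightarrow> u \<le> \<beta> \<Longrightarrow> P (if \<tau>1 \<le> u then x u else x' u) u"
  have P_left: "P (x' u) u" if "\<alpha> \<le> u" "u \<le> \<beta>" "u \<le> \<tau>1" for u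
    using P[OF that(1,2)] that(3) \<open>x' \<tau>1 = x \<tau>1\<close> by (cases "u = \<tau>1") auto
  have P_right: "P (x u) u" if "\<alpha> \<le> u" "u \<le> \<beta>" "\<tau>1 \<le> u" for u
    using P[OF that(1,2)] that(3) by simp
  consider "\<tau>1 \<le> \<alpha>" | "\<beta> < \<tau>1" | "\<alpha> < \<tau>1" "\<tau>1 \<le> \<beta>" by linarith
  then show "(if \<tau>1 \<le> \<alpha> then F \<alpha> else F \<tau>1 + F' \<alpha>) = (if \<tau>1 \<le> \<beta> then F \<beta> else F \<tau>1 + F' \<beta>)"
  proof cases
    case 1
    have "F \<alpha> = F \<beta>" by (rule flat_whereD[OF right]) (use \<alpha>\<beta> P_right 1 in auto)
    then show ?thesis using 1 \<alpha>\<beta>(2) by simp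
  next
    case 2
    have "F' \<alpha> = F' \<beta>" by (rule flat_whereD[OF left]) (use \<alpha>\<beta> P_left 2 in auto)
    then show ?thesis using 2 \<alpha>\<beta>(2) by simp
  next
    case 3
    have "F' \<alpha> = F' \<tau>1" by (rule flat_whereD[OF left]) (use \<alpha>\<beta> P_left 3 in auto)
    moreover have "F \<tau>1 = F \<beta>" by (rule flat_whereD[OF right]) (use \<alpha>\<beta> P_right 3 in auto)
    ultimately show ?thesis using 3 \<open>F' \<tau>1 = 0\<close> by simp
  qed
qed

lemma antimono_on_concat:
  fixes F F' :: "real \<Rightarrow> real"
  assumes left: "antimono_on {\<tau>..\<tau>1} F'" and right: "antimono_on {\<tau>1..\<tau>2} F" and "F' \<tau>1 = 0"
  shows "antimono_on {\<tau>..\<tau>2} (\<lambda>t. if \<tau>1 \<le> t then F t else F \<tau>1 + F' t)"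
proof (rule monotone_onI)
  fix t t' assume t: "t \<in> {\<tau>..\<tau>2}" "t' \<in> {\<tau>..\<tau>2}" "t \<le> t'"
  consider "\<tau>1 \<le> t" | "t' < \<tau>1" | "t < \<tau>1" "\<tau>1 \<le> t'" by linarith
  then show "(if \<tau>1 \<le> t' then F t' else F \<tau>1 + F' t') \<le> (if \<tau>1 \<le> t then F t else F \<tau>1 + F' t)"
  proof cases
    case 3
    have "F' \<tau>1 \<le> F' t" by (rule monotone_onD[OF left]) (use t 3 in auto)
    moreover have "F t' \<le> F \<tau>1" by (rule monotone_onD[OF right]) (use t 3 in auto)
    ultimately show ?thesis using 3 \<open>F' \<tau>1 = 0\<close> by simp
  qed (use t in \<open>auto intro: monotone_onD[OF left] monotone_onD[OF right]\<close>)
qed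

lemma continuous_on_concat:
  fixes f g :: "real \<Rightarrow> real"
  assumes "continuous_on {\<tau>..\<tau>1} f" "continuous_on {\<tau>1..\<tau>2} g" "f \<tau>1 = g \<tau>1" "\<tau> \<le> \<tau>1" "\<tau>1 \<le> \<tau>2"
  shows "continuous_on {\<tau>..\<tau>2} (\<lambda>t. if \<tau>1 \<le> t then g t else f t)"
proof -
  have "continuous_on ({\<tau>..\<tau>1} \<union> {\<tau>1..\<tau>2}) (\<lambda>t. if \<tau>1 \<le> t then g t else f t)"
  proof (rule continuous_on_closed_Un)
    show "continuous_on {\<tau>..\<tau>1} (\<lambda>t. if \<tau>1 \<le> t then g t else f t)"
      by (rule continuous_on_eq[OF assms(1)]) (use assms(3) in auto)
    show "continuous_on {\<tau>1..\<tau>2} (\<lambda>t. if \<tau>1 \<le> t then g t else f t)"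
      by (rule continuous_on_eq[OF assms(2)]) auto
  qed auto
  moreover have "{\<tau>..\<tau>1} \<union> {\<tau>1..\<tau>2} = {\<tau>..\<tau>2}" using assms(4,5) by auto
  ultimately show ?thesis by simp
qed

text \<open>
  R t and L t play the roles of k^r \<tau>1 - k^r t and k^l \<tau>1 - k^l t, and the flatness conditions
  are the interval form of the complementarity conditions for k^r and k^l.
\<close>

definition backward_reflection ::
  "(real \<Rightarrow> real) \<Rightarrow> (real \<Rightarrow> real) \<Rightarrow> (real \<Rightarrow> real) \<Rightarrow> real \<Rightarrow> real \<Rightarrow> real \<Rightarrow>
   (real \<Rightarrow> real) \<Rightarrow> (real \<Rightarrow> real) \<Rightarrow> (real \<Rightarrow> real) \<Rightarrow> bool" where
  "backward_reflection lo hi s \<tau> \<tau>1 b x R L \<longleftrightarrow>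
     continuous_on {\<tau>..\<tau>1} x \<and> continuous_on {\<tau>..\<tau>1} R \<and> continuous_on {\<tau>..\<tau>1} L \<and>
     R \<tau>1 = 0 \<and> L \<tau>1 = 0 \<and> antimono_on {\<tau>..\<tau>1} R \<and> antimono_on {\<tau>..\<tau>1} L \<and>
     (\<forall>t\<in>{\<tau>..\<tau>1}. x t = b + s \<tau>1 - s t + R t - L t \<and> lo t \<le> x t \<and> x t \<le> hi t) \<and>
     flat_where (\<lambda>u. lo u < x u) \<tau> \<tau>1 R \<and> flat_where (\<lambda>u. x u < hi u) \<tau> \<tau>1 L"

lemma backward_reflection_at:
  assumes "backward_reflection lo hi s \<tau> \<tau>1 b x R L" "t \<in> {\<tau>..\<tau>1}"
  shows "x t = b + s \<tau>1 - s t + R t - L t" "lo t \<le> x t" "x t \<le> hi t"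
  using assms unfolding backward_reflection_def by blast+

lemma backward_reflection_reflect:
  assumes "backward_reflection lo hi s \<tau> \<tau>1 b x R L"
  shows "backward_reflection (\<lambda>t. - hi t) (\<lambda>t. - lo t) (\<lambda>t. - s t) \<tau> \<tau>1 (- b) (\<lambda>t. - x t) L R"
  using assms by (auto simp: backward_reflection_def intro: continuous_on_minus)

lemma backward_reflection_concat:
  assumes left: "backward_reflection lo hi s \<tau> \<tau>1 (x \<tau>1) x' R' L'"
    and right: "backward_reflection lo hi s \<tau>1 \<tau>2 b x R L" and "\<tau> \<le> \<tau>1" "\<tau>1 \<le> \<tau>2"
  shows "backward_reflection lo hi s \<tau> \<tau>2 b (\<lambda>t. if \<tau>1 \<le> t then x t else x' t)
     (\<lambda>t. if \<tau>1 \<le> t then R t else R \<tau>1 + R' t) (\<lambda>t. if \<tau>1 \<le> t then L t else L \<tau>1 + L' t)"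
proof -
  let ?x = "\<lambda>t. if \<tau>1 \<le> t then x t else x' t"
  note A = left[unfolded backward_reflection_def] and B = right[unfolded backward_reflection_def]
  have "x' \<tau>1 = x \<tau>1" using A \<open>\<tau> \<le> \<tau>1\<close> by auto
  have A_pt: "x' t = x \<tau>1 + s \<tau>1 - s t + R' t - L' t \<and> lo t \<le> x' t \<and> x' t \<le> hi t"
    if "t \<in> {\<tau>..\<tau>1}" for t using A that by blast
  have B_pt: "x t = b + s \<tau>2 - s t + R t - L t \<and> lo t \<le> x t \<and> x t \<le> hi t"
    if "t \<in> {\<tau>1..\<tau>2}" for t using B that by blast
  have "\<forall>t\<in>{\<tau>..\<tau>2}. ?x t = b + s \<tau>2 - s t + (if \<tau>1 \<le> t then R t else R \<tau>1 + R' t)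
      - (if \<tau>1 \<le> t then L t else L \<tau>1 + L' t) \<and> lo t \<le> ?x t \<and> ?x t \<le> hi t"
  proof
    fix t assume t: "t \<in> {\<tau>..\<tau>2}"
    show "?x t = b + s \<tau>2 - s t + (if \<tau>1 \<le> t then R t else R \<tau>1 + R' t)
      - (if \<tau>1 \<le> t then L t else L \<tau>1 + L' t) \<and> lo t \<le> ?x t \<and> ?x t \<le> hi t"
    proof (cases "\<tau>1 \<le> t")
      case True
      then show ?thesis using B_pt[of t] t by simp
    next
      case False
      then show ?thesis using A_pt[of t] B_pt[of \<tau>1] t assms(3,4) by auto
    qed
  qed
  moreover have "continuous_on {\<tau>..\<tau>2} ?x"
    using continuous_on_concat[of \<tau> \<tau>1 x' \<tau>2 x] A B \<open>x' \<tau>1 = x \<tau>1\<close> assms(3,4) by blast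
  moreover have "continuous_on {\<tau>..\<tau>2} (\<lambda>t. if \<tau>1 \<le> t then R t else R \<tau>1 + R' t)"
    by (rule continuous_on_concat) (use A B assms(3,4) in \<open>auto intro: continuous_intros\<close>)
  moreover have "continuous_on {\<tau>..\<tau>2} (\<lambda>t. if \<tau>1 \<le> t then L t else L \<tau>1 + L' t)"
    by (rule continuous_on_concat) (use A B assms(3,4) in \<open>auto intro: continuous_intros\<close>)
  moreover have "antimono_on {\<tau>..\<tau>2} (\<lambda>t. if \<tau>1 \<le> t then R t else R \<tau>1 + R' t)"
    "antimono_on {\<tau>..\<tau>2} (\<lambda>t. if \<tau>1 \<le> t then L t else L \<tau>1 + L' t)"
    using A B by (intro antimono_on_concat; blast)+
  moreover have "flat_where (\<lambda>u. lo u < ?x u) \<tau> \<tau>2 (\<lambda>t. if \<tau>1 \<le> t then R t else R \<tau>1 + R' t)"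
    using flat_where_concat[where P = "\<lambda>y u. lo u < y"] A B \<open>x' \<tau>1 = x \<tau>1\<close> by blast
  moreover have "flat_where (\<lambda>u. ?x u < hi u) \<tau> \<tau>2 (\<lambda>t. if \<tau>1 \<le> t then L t else L \<tau>1 + L' t)"
    using flat_where_concat[where P = "\<lambda>y u. y < hi u"] A B \<open>x' \<tau>1 = x \<tau>1\<close> by blast
  ultimately show ?thesis
    unfolding backward_reflection_def using A B assms(4) by (intro conjI) auto
qed

text \<open>The running-supremum formula for the one-sided Skorokhod map, run backwards from \<tau>1.\<close>

lemma one_sided_backward_reflection:
  assumes z: "continuous_on {\<tau>..\<tau>1} z" and lo: "continuous_on {\<tau>..\<tau>1} lo" and "lo \<tau>1 \<le> z \<tau>1"
  defines "R \<equiv> tail_sup (\<lambda>u. max 0 (lo u - z u)) \<tau>1"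
  shows "continuous_on {\<tau>..\<tau>1} R" "R \<tau>1 = 0" "antimono_on {\<tau>..\<tau>1} R"
    and "\<And>t. t \<in> {\<tau>..\<tau>1} \<Longrightarrow> lo t \<le> z t + R t"
    and "\<And>t. t \<in> {\<tau>..\<tau>1} \<Longrightarrow> \<exists>u\<in>{t..\<tau>1}. z t + R t = max (z t) (lo u + z t - z u)"
    and "flat_where (\<lambda>u. lo u < z u + R u) \<tau> \<tau>1 R"
proof -
  define g where "g u = max 0 (lo u - z u)" for u
  have g: "continuous_on {\<tau>..\<tau>1} g" unfolding g_def using z lo by (intro continuous_intros)
  have R: "R = tail_sup g \<tau>1" unfolding R_def g_def ..
  show "continuous_on {\<tau>..\<tau>1} R" unfolding R by (rule continuous_on_tail_sup[OF g])
  show "R \<tau>1 = 0" unfolding R g_def using \<open>lo \<tau>1 \<le> z \<tau>1\<close> by simp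
  show "antimono_on {\<tau>..\<tau>1} R" unfolding R by (rule monotone_onI) (auto intro: tail_sup_antimono[OF g])
  show "lo t \<le> z t + R t" if "t \<in> {\<tau>..\<tau>1}" for t
    using tail_sup_upper[OF g, of t t] that unfolding R g_def by auto
  show "\<exists>u\<in>{t..\<tau>1}. z t + R t = max (z t) (lo u + z t - z u)" if "t \<in> {\<tau>..\<tau>1}" for t
  proof -
    have "\<tau> \<le> t" "t \<le> \<tau>1" using that by auto
    then obtain u where "u \<in> {t..\<tau>1}" "tail_sup g \<tau>1 t = g u"
      by (rule tail_sup_attained[OF g])
    then show ?thesis unfolding R g_def by (intro bexI[of _ u]) auto
  qed
  \<comment> \<open>A drop of R on [\<alpha>, \<beta>] is realised at some u < \<beta> where z + R touches lo.\<close>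
  show "flat_where (\<lambda>u. lo u < z u + R u) \<tau> \<tau>1 R"
  proof (rule flat_whereI, rule ccontr)
    fix \<alpha> \<beta> assume \<alpha>\<beta>: "\<tau> \<le> \<alpha>" "\<alpha> \<le> \<beta>" "\<beta> \<le> \<tau>1" and above: "\<And>u. \<alpha> \<le> u \<Longrightarrow> u \<le> \<beta> \<Longrightarrow> lo u < z u + R u"
      and "R \<alpha> \<noteq> R \<beta>"
    moreover have "R \<beta> \<le> R \<alpha>" unfolding R using tail_sup_antimono[OF g \<alpha>\<beta>] .
    ultimately have less: "R \<beta> < R \<alpha>" by simp
    have "\<alpha> \<le> \<tau>1" using \<alpha>\<beta> by simp
    then obtain u where u: "u \<in> {\<alpha>..\<tau>1}" "tail_sup g \<tau>1 \<alpha> = g u"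
      by (rule tail_sup_attained[OF g \<alpha>\<beta>(1)])
    have "u < \<beta>"
      using tail_sup_upper[OF g, of \<beta> u] less u \<alpha>\<beta> by (force simp: R)
    have "0 \<le> R \<beta>"
      using tail_sup_upper[OF g, of \<beta> \<beta>] \<alpha>\<beta> by (simp add: R g_def)
    moreover have R\<alpha>: "R \<alpha> = g u" using u(2) by (simp add: R)
    ultimately have "g u = lo u - z u" using less unfolding g_def by auto
    moreover have "g u \<le> R u" "R u \<le> R \<alpha>"
      using tail_sup_upper[OF g, of u u] tail_sup_antimono[OF g, of \<alpha> u] u \<alpha>\<beta> by (auto simp: R)
    ultimately have "z u + R u = lo u" using R\<alpha> by simp
    then show False using above[of u] u \<open>u < \<beta>\<close> by auto
  qed
qed

definition calm_cell :: "(real \<Rightarrow> real) \<Rightarrow> (real \<Rightarrow> real) \<Rightarrow> (real \<Rightarrow> real) \<Rightarrow> real \<Rightarrow> real \<Rightarrow> real \<Rightarrow> bool" where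
  "calm_cell lo hi s \<eta> \<tau> \<tau>1 \<longleftrightarrow>
     continuous_on {\<tau>..\<tau>1} lo \<and> continuous_on {\<tau>..\<tau>1} hi \<and> continuous_on {\<tau>..\<tau>1} s \<and>
     (\<forall>t\<in>{\<tau>..\<tau>1}. \<eta> \<le> hi t - lo t) \<and>
     (\<forall>t\<in>{\<tau>..\<tau>1}. \<forall>u\<in>{\<tau>..\<tau>1}. \<bar>s t - s u\<bar> + \<bar>hi t - hi u\<bar> + \<bar>lo t - lo u\<bar> < \<eta> / 2)"

lemma calm_cellD:
  assumes "calm_cell lo hi s \<eta> \<tau> \<tau>1" "t \<in> {\<tau>..\<tau>1}" "u \<in> {\<tau>..\<tau>1}"
  shows "\<eta> \<le> hi t - lo t" "\<bar>s t - s u\<bar> + \<bar>hi t - hi u\<bar> + \<bar>lo t - lo u\<bar> < \<eta> / 2"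
  using assms by (auto simp: calm_cell_def)

lemma calm_cell_reflect:
  assumes "calm_cell lo hi s \<eta> \<tau> \<tau>1"
  shows "calm_cell (\<lambda>t. - hi t) (\<lambda>t. - lo t) (\<lambda>t. - s t) \<eta> \<tau> \<tau>1"
proof -
  have "\<bar>- a + b\<bar> = \<bar>a - b\<bar>" for a b :: real by linarith
  then show ?thesis
    using assms by (auto simp: calm_cell_def add.commute add.left_commute intro: continuous_on_minus)
qed

lemma calm_cells_exist:
  assumes "continuous_on {0..T} lo" "continuous_on {0..T} hi" "continuous_on {0..T} s"
    and "\<eta> > 0" "\<And>t. t \<in> {0..T} \<Longrightarrow> \<eta> \<le> hi t - lo t"
  obtains h where "h > 0"
    "\<And>\<tau> \<tau>1. 0 \<le> \<tau> \<Longrightarrow> \<tau> \<le> \<tau>1 \<Longrightarrow> \<tau>1 \<le> T \<Longrightarrow> \<tau>1 - \<tau> \<le> h \<Longrightarrow> calm_cell lo hi s \<eta> \<tau> \<tau>1"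
proof -
  have uc: "\<exists>d>0. \<forall>t\<in>{0..T}. \<forall>u\<in>{0..T}. \<bar>t - u\<bar> < d \<longrightarrow> \<bar>f t - f u\<bar> < \<eta> / 6"
    if "continuous_on {0..T} f" for f
    using compact_uniformly_continuous[OF that] \<open>\<eta> > 0\<close>
    unfolding uniformly_continuous_on_def dist_real_def by (metis compact_Icc divide_pos_pos zero_less_numeral)
  obtain d1 d2 d3 where d: "d1 > 0" "d2 > 0" "d3 > 0"
    and osc: "\<forall>t\<in>{0..T}. \<forall>u\<in>{0..T}. \<bar>t - u\<bar> < d1 \<longrightarrow> \<bar>s t - s u\<bar> < \<eta> / 6"
      "\<forall>t\<in>{0..T}. \<forall>u\<in>{0..T}. \<bar>t - u\<bar> < d2 \<longrightarrow> \<bar>hi t - hi u\<bar> < \<eta> / 6"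
      "\<forall>t\<in>{0..T}. \<forall>u\<in>{0..T}. \<bar>t - u\<bar> < d3 \<longrightarrow> \<bar>lo t - lo u\<bar> < \<eta> / 6"
    using uc[OF assms(3)] uc[OF assms(2)] uc[OF assms(1)] by blast
  define h where "h = min d1 (min d2 d3) / 2"
  show thesis
  proof (rule that)
    show "h > 0" using d by (simp add: h_def)
    fix \<tau> \<tau>1 assume cell: "0 \<le> \<tau>" "\<tau> \<le> \<tau>1" "\<tau>1 \<le> T" "\<tau>1 - \<tau> \<le> h"
    then have sub: "{\<tau>..\<tau>1} \<subseteq> {0..T}" by auto
    have "\<bar>s t - s u\<bar> + \<bar>hi t - hi u\<bar> + \<bar>lo t - lo u\<bar> < \<eta> / 2"
      if "t \<in> {\<tau>..\<tau>1}" "u \<in> {\<tau>..\<tau>1}" for t u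
    proof -
      have "\<bar>t - u\<bar> < d1" "\<bar>t - u\<bar> < d2" "\<bar>t - u\<bar> < d3"
        using that cell d by (auto simp: h_def abs_le_iff)
      then have "\<bar>s t - s u\<bar> < \<eta> / 6" "\<bar>hi t - hi u\<bar> < \<eta> / 6" "\<bar>lo t - lo u\<bar> < \<eta> / 6"
        using osc that sub by blast+
      then show ?thesis by linarith
    qed
    then show "calm_cell lo hi s \<eta> \<tau> \<tau>1"
      unfolding calm_cell_def using assms(1-3,5) sub by (auto intro: continuous_on_subset)
  qed
qed

lemma backward_reflection_lower_cell:
  assumes calm: "calm_cell lo hi s \<eta> \<tau> \<tau>1" and "\<tau> \<le> \<tau>1"
    and b: "lo \<tau>1 \<le> b" "b \<le> (lo \<tau>1 + hi \<tau>1) / 2"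
  shows "\<exists>x R L. backward_reflection lo hi s \<tau> \<tau>1 b x R L"
proof -
  note C = calm[unfolded calm_cell_def]
  define z where "z t = b + s \<tau>1 - s t" for t
  have z: "continuous_on {\<tau>..\<tau>1} z" unfolding z_def using C by (intro continuous_intros) auto
  have lo: "continuous_on {\<tau>..\<tau>1} lo" using C by blast
  have "lo \<tau>1 \<le> z \<tau>1" using b by (simp add: z_def)
  define R where "R = tail_sup (\<lambda>u. max 0 (lo u - z u)) \<tau>1"
  note reflect = one_sided_backward_reflection[OF z lo \<open>lo \<tau>1 \<le> z \<tau>1\<close>, folded R_def]
  have below_hi: "z t + R t \<le> hi t" if t: "t \<in> {\<tau>..\<tau>1}" for t
  proof -
    obtain u where "u \<in> {t..\<tau>1}" and u: "z t + R t = max (z t) (lo u + z t - z u)"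
      using reflect(5)[OF t] by auto
    then have "u \<in> {\<tau>..\<tau>1}" "\<tau>1 \<in> {\<tau>..\<tau>1}" using t by auto
    then have "\<bar>s \<tau>1 - s t\<bar> + \<bar>hi \<tau>1 - hi t\<bar> + \<bar>lo \<tau>1 - lo t\<bar> < \<eta> / 2"
      "\<bar>s u - s t\<bar> + \<bar>hi u - hi t\<bar> + \<bar>lo u - lo t\<bar> < \<eta> / 2"
      "\<eta> \<le> hi u - lo u" "\<eta> \<le> hi \<tau>1 - lo \<tau>1"
      using calm_cellD[OF calm _ t] by auto
    note bounds = this z_def[of t] z_def[of u] b(2)
    have "z t \<le> hi t" "lo u + z t - z u \<le> hi t"
      using bounds by (auto simp: abs_if split: if_splits)
    then show ?thesis using u by simp
  qed
  have "flat_where (\<lambda>u. z u + R u < hi u) \<tau> \<tau>1 (\<lambda>_. 0)"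
    by (simp add: flat_where_def)
  then have "backward_reflection lo hi s \<tau> \<tau>1 b (\<lambda>t. z t + R t) R (\<lambda>_. 0)"
    unfolding backward_reflection_def using reflect z below_hi antimono_on_const[of _ "0::real"]
    by (auto simp: z_def intro: continuous_intros)
  then show ?thesis by blast
qed

lemma backward_reflection_cell:
  assumes calm: "calm_cell lo hi s \<eta> \<tau> \<tau>1" and "\<tau> \<le> \<tau>1" and "lo \<tau>1 \<le> b" "b \<le> hi \<tau>1"
  shows "\<exists>x R L. backward_reflection lo hi s \<tau> \<tau>1 b x R L"
proof (cases "b \<le> (lo \<tau>1 + hi \<tau>1) / 2")
  case True
  then show ?thesis using backward_reflection_lower_cell[OF calm] assms(2,3) by blast
next
  case False
  then obtain x R L
    where "backward_reflection (\<lambda>t. - hi t) (\<lambda>t. - lo t) (\<lambda>t. - s t) \<tau> \<tau>1 (- b) x R L"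
    using backward_reflection_lower_cell[OF calm_cell_reflect[OF calm] \<open>\<tau> \<le> \<tau>1\<close>] assms(4) by fastforce
  from backward_reflection_reflect[OF this] show ?thesis by auto
qed

lemma backward_reflection_exists:
  assumes "continuous_on {0..T} lo" "continuous_on {0..T} hi" "continuous_on {0..T} s"
    and "\<eta> > 0" "\<And>t. t \<in> {0..T} \<Longrightarrow> \<eta> \<le> hi t - lo t"
    and "0 \<le> T" "lo T \<le> a" "a \<le> hi T"
  shows "\<exists>x R L. backward_reflection lo hi s 0 T a x R L"
proof -
  obtain h where "h > 0" and calm:
    "\<And>\<tau> \<tau>1. 0 \<le> \<tau> \<Longrightarrow> \<tau> \<le> \<tau>1 \<Longrightarrow> \<tau>1 \<le> T \<Longrightarrow> \<tau>1 - \<tau> \<le> h \<Longrightarrow> calm_cell lo hi s \<eta> \<tau> \<tau>1"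
    using calm_cells_exist[OF assms(1-5)] by blast
  have "\<exists>x R L. backward_reflection lo hi s \<tau> T a x R L"
    if "0 \<le> \<tau>" "\<tau> \<le> T" "T - \<tau> \<le> real n * h" for n \<tau>
    using that
  proof (induction n arbitrary: \<tau>)
    case 0
    then have "backward_reflection lo hi s \<tau> T a (\<lambda>_. a) (\<lambda>_. 0) (\<lambda>_. 0)"
      using assms(7,8) by (auto simp: backward_reflection_def flat_where_def antimono_on_const)
    then show ?case by blast
  next
    case (Suc n)
    define \<tau>1 where "\<tau>1 = min T (\<tau> + h)"
    have \<tau>1: "\<tau> \<le> \<tau>1" "\<tau>1 \<le> T" "\<tau>1 - \<tau> \<le> h" "T - \<tau>1 \<le> real n * h"
      using Suc.prems \<open>h > 0\<close> by (auto simp: \<tau>1_def algebra_simps min_def)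
    obtain x R L where right: "backward_reflection lo hi s \<tau>1 T a x R L"
      using Suc.IH[of \<tau>1] Suc.prems \<tau>1 by auto
    then have "lo \<tau>1 \<le> x \<tau>1" "x \<tau>1 \<le> hi \<tau>1"
      using backward_reflection_at(2,3) \<tau>1 by auto
    then obtain x' R' L' where "backward_reflection lo hi s \<tau> \<tau>1 (x \<tau>1) x' R' L'"
      using backward_reflection_cell[OF calm] Suc.prems \<tau>1 by blast
    then show ?case using backward_reflection_concat[OF _ right \<tau>1(1,2)] by blast
  qed
  moreover obtain n where "T \<le> real n * h"
    using real_arch_simple[of "T / h"] \<open>h > 0\<close> by (auto simp: field_simps)
  ultimately show ?thesis using \<open>0 \<le> T\<close> by auto
qed

section \<open>The barriers of Assumption (A)\<close>

lemma strict_mono_root_exists: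
  fixes f :: "real \<Rightarrow> real"
  assumes "strict_mono f" "c > 0"
    and bounds: "\<And>x y. c * \<bar>x - y\<bar> \<le> \<bar>f x - f y\<bar> \<and> \<bar>f x - f y\<bar> \<le> C * \<bar>x - y\<bar>"
  shows "\<exists>y. f y = 0"
proof -
  define m where "m = \<bar>f 0\<bar> / c"
  have "0 \<le> m" "c * m = \<bar>f 0\<bar>" using \<open>c > 0\<close> by (auto simp: m_def)
  have "0 \<le> C" using order_trans[OF abs_ge_zero, of "f 1 - f 0" C] bounds[of 1 0] by simp
  then have "continuous_on {-m..m} f"
    by (intro lipschitz_on_continuous_on lipschitz_onI) (auto simp: dist_real_def bounds)
  moreover have "f (-m) \<le> f 0" "f 0 \<le> f m"
    using \<open>strict_mono f\<close> \<open>0 \<le> m\<close> by (auto simp: strict_mono_less_eq)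
  moreover have "c * m \<le> \<bar>f m - f 0\<bar>" "c * m \<le> \<bar>f (-m) - f 0\<bar>"
    using bounds[of m 0] bounds[of "-m" 0] \<open>0 \<le> m\<close> by auto
  ultimately show ?thesis
    using IVT'[of f "-m" 0 m] \<open>0 \<le> m\<close> \<open>c * m = \<bar>f 0\<bar>\<close> by (auto simp: abs_if split: if_splits)
qed

lemma continuous_on_root:
  fixes f :: "real \<Rightarrow> real \<Rightarrow> real"
  assumes cont: "\<And>y. continuous_on S (\<lambda>t. f t y)" and "c > 0"
    and expanding: "\<And>t y z. t \<in> S \<Longrightarrow> c * \<bar>y - z\<bar> \<le> \<bar>f t y - f t z\<bar>"
    and root: "\<And>t. t \<in> S \<Longrightarrow> f t (\<rho> t) = 0"
  shows "continuous_on S \<rho>"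
  unfolding continuous_on_iff
proof (intro ballI allI impI)
  fix t e :: real assume "t \<in> S" "e > 0"
  then have "c * e > 0" using \<open>c > 0\<close> by simp
  then obtain d where "d > 0" and d: "\<And>t'. t' \<in> S \<Longrightarrow> dist t' t < d \<Longrightarrow> dist (f t' (\<rho> t)) (f t (\<rho> t)) < c * e"
    using cont[of "\<rho> t", unfolded continuous_on_iff] \<open>t \<in> S\<close> by blast
  show "\<exists>d>0. \<forall>t'\<in>S. dist t' t < d \<longrightarrow> dist (\<rho> t') (\<rho> t) < e"
  proof (intro exI[of _ d] conjI ballI impI)
    fix t' assume "t' \<in> S" "dist t' t < d"
    have "c * \<bar>\<rho> t' - \<rho> t\<bar> \<le> \<bar>f t' (\<rho> t') - f t' (\<rho> t)\<bar>" using expanding \<open>t' \<in> S\<close> .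
    also have "\<dots> = dist (f t' (\<rho> t)) (f t (\<rho> t))" using root \<open>t \<in> S\<close> \<open>t' \<in> S\<close> by (simp add: dist_real_def)
    also have "\<dots> < c * e" using d \<open>t' \<in> S\<close> \<open>dist t' t < d\<close> .
    finally show "dist (\<rho> t') (\<rho> t) < e" using \<open>c > 0\<close> by (simp add: dist_real_def)
  qed (use \<open>d > 0\<close> in auto)
qed

lemma continuous_time_dependent_root:
  fixes f :: "real \<Rightarrow> real \<Rightarrow> real"
  assumes mono: "\<And>t. t \<in> S \<Longrightarrow> strict_mono (f t)" and "c > 0"
    and bounds: "\<And>t y z. t \<in> S \<Longrightarrow> c * \<bar>y - z\<bar> \<le> \<bar>f t y - f t z\<bar> \<and> \<bar>f t y - f t z\<bar> \<le> C * \<bar>y - z\<bar>"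
    and cont: "\<And>y. continuous_on S (\<lambda>t. f t y)"
  obtains \<rho> where "continuous_on S \<rho>" "\<And>t. t \<in> S \<Longrightarrow> f t (\<rho> t) = 0"
    "\<And>t y. t \<in> S \<Longrightarrow> (f t y \<le> 0 \<longleftrightarrow> y \<le> \<rho> t) \<and> (f t y < 0 \<longleftrightarrow> y < \<rho> t)"
proof
  define \<rho> where "\<rho> t = (SOME y. f t y = 0)" for t
  show root: "f t (\<rho> t) = 0" if "t \<in> S" for t
    unfolding \<rho>_def by (rule someI_ex, rule strict_mono_root_exists[OF mono[OF that] \<open>c > 0\<close> bounds[OF that]])
  show "continuous_on S \<rho>"
  proof (rule continuous_on_root[OF _ \<open>c > 0\<close>])
    show "c * \<bar>y - z\<bar> \<le> \<bar>f t y - f t z\<bar>" if "t \<in> S" for t y z using bounds[OF that] by blast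
  qed (use cont root in auto)
  show "(f t y \<le> 0 \<longleftrightarrow> y \<le> \<rho> t) \<and> (f t y < 0 \<longleftrightarrow> y < \<rho> t)" if "t \<in> S" for t y
    using strict_mono_less_eq[OF mono[OF that], of y "\<rho> t"] strict_mono_less[OF mono[OF that], of y "\<rho> t"]
      root[OF that] by simp
qed

lemma assumptionA_barriers:
  assumes "assumptionA T l r"
  obtains lo hi \<eta> where "continuous_on {0..T} lo" "continuous_on {0..T} hi" "\<eta> > 0"
    "\<And>t. t \<in> {0..T} \<Longrightarrow> \<eta> \<le> hi t - lo t"
    "\<And>t y. t \<in> {0..T} \<Longrightarrow> (l t y \<le> 0 \<longleftrightarrow> y \<le> hi t) \<and> (l t y < 0 \<longleftrightarrow> y < hi t)"
    "\<And>t y. t \<in> {0..T} \<Longrightarrow> (0 \<le> r t y \<longleftrightarrow> lo t \<le> y) \<and> (0 < r t y \<longleftrightarrow> lo t < y)"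
proof -
  obtain c C where "0 < c" "c < C"
    and bounds: "\<forall>t\<in>{0..T}. \<forall>x y.
        c * \<bar>x - y\<bar> \<le> \<bar>l t x - l t y\<bar> \<and> \<bar>l t x - l t y\<bar> \<le> C * \<bar>x - y\<bar> \<and>
        c * \<bar>x - y\<bar> \<le> \<bar>r t x - r t y\<bar> \<and> \<bar>r t x - r t y\<bar> \<le> C * \<bar>x - y\<bar>"
    using assms unfolding assumptionA_def by blast
  obtain \<delta> where "\<delta> > 0" and gap: "\<forall>t\<in>{0..T}. \<forall>x. \<delta> \<le> r t x - l t x"
    using assms unfolding assumptionA_def by blast
  have mono: "\<And>t. t \<in> {0..T} \<Longrightarrow> strict_mono (l t)" "\<And>t. t \<in> {0..T} \<Longrightarrow> strict_mono (r t)"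
    and cont: "\<And>y. continuous_on {0..T} (\<lambda>t. l t y)" "\<And>y. continuous_on {0..T} (\<lambda>t. r t y)"
    using assms unfolding assumptionA_def by auto
  obtain hi where hi: "continuous_on {0..T} hi" "\<And>t. t \<in> {0..T} \<Longrightarrow> l t (hi t) = 0"
    "\<And>t y. t \<in> {0..T} \<Longrightarrow> (l t y \<le> 0 \<longleftrightarrow> y \<le> hi t) \<and> (l t y < 0 \<longleftrightarrow> y < hi t)"
    by (rule continuous_time_dependent_root[of "{0..T}" l c C]) (use mono cont bounds \<open>c > 0\<close> in auto)
  obtain lo where lo: "continuous_on {0..T} lo" "\<And>t. t \<in> {0..T} \<Longrightarrow> r t (lo t) = 0"
    "\<And>t y. t \<in> {0..T} \<Longrightarrow> (r t y \<le> 0 \<longleftrightarrow> y \<le> lo t) \<and> (r t y < 0 \<longleftrightarrow> y < lo t)"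
    by (rule continuous_time_dependent_root[of "{0..T}" r c C]) (use mono cont bounds \<open>c > 0\<close> in auto)
  have width: "\<delta> / C \<le> hi t - lo t" if "t \<in> {0..T}" for t
  proof -
    have "\<delta> \<le> r t (hi t)" using gap that hi(2)[OF that] by (metis diff_zero)
    then have "lo t < hi t" using lo(3)[OF that, of "hi t"] \<open>\<delta> > 0\<close> by auto
    moreover have "\<bar>r t (hi t) - r t (lo t)\<bar> \<le> C * \<bar>hi t - lo t\<bar>" using bounds that by blast
    ultimately have "r t (hi t) \<le> C * (hi t - lo t)"
      using lo(2)[OF that] by (simp add: abs_le_iff)
    then have "\<delta> \<le> C * (hi t - lo t)" using \<open>\<delta> \<le> r t (hi t)\<close> by linarith
    then show ?thesis using \<open>c < C\<close> \<open>0 < c\<close> by (simp add: pos_divide_le_eq mult.commute)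
  qed
  have r_sign: "(0 \<le> r t y \<longleftrightarrow> lo t \<le> y) \<and> (0 < r t y \<longleftrightarrow> lo t < y)" if "t \<in> {0..T}" for t y
    using lo(3)[OF that, of y] by auto
  have "\<delta> / C > 0" using \<open>\<delta> > 0\<close> \<open>0 < c\<close> \<open>c < C\<close> by simp
  from that[OF lo(1) hi(1) this width hi(3) r_sign] show thesis .
qed

section \<open>Bounded variation and Lebesgue--Stieltjes measures\<close>

lemma bounded_var_diff_mono:
  assumes F: "mono_on {0..T} F" and G: "mono_on {0..T} G" and "0 \<le> T"
  shows "bounded_var T (\<lambda>t. F t - G t)"
  unfolding bounded_var_def
proof (intro exI allI impI)
  fix ts :: "nat \<Rightarrow> real" and n
  assume p: "0 \<le> ts 0 \<and> ts n \<le> T \<and> (\<forall>i<n. ts i \<le> ts (Suc i))"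
  have ts_mono: "ts i \<le> ts j" if "i \<le> j" "j \<le> n" for i j
  proof -
    have "{i..<j} \<subseteq> {..<n}" using that by auto
    then show ?thesis using lift_Suc_mono_le_ivl[of "{..<n}" ts i j] p that by blast
  qed
  have ts: "ts i \<in> {0..T}" if "i \<le> n" for i
    using ts_mono[of 0 i] ts_mono[of i n] p that by auto
  have "\<bar>F (ts (Suc i)) - G (ts (Suc i)) - (F (ts i) - G (ts i))\<bar>
      \<le> (F (ts (Suc i)) - F (ts i)) + (G (ts (Suc i)) - G (ts i))" if "i < n" for i
    using mono_onD[OF F, of "ts i" "ts (Suc i)"] mono_onD[OF G, of "ts i" "ts (Suc i)"] ts[of i] ts[of "Suc i"] p that
    by auto
  then have "(\<Sum>i<n. \<bar>F (ts (Suc i)) - G (ts (Suc i)) - (F (ts i) - G (ts i))\<bar>)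
      \<le> (\<Sum>i<n. (F (ts (Suc i)) - F (ts i)) + (G (ts (Suc i)) - G (ts i)))"
    by (intro sum_mono) auto
  also have "\<dots> = (F (ts n) - F (ts 0)) + (G (ts n) - G (ts 0))"
    by (simp add: sum.distrib sum_lessThan_telescope[of "\<lambda>i. F (ts i)"] sum_lessThan_telescope[of "\<lambda>i. G (ts i)"])
  also have "\<dots> \<le> (F T - F 0) + (G T - G 0)"
  proof -
    have "F (ts n) \<le> F T" "G (ts n) \<le> G T" "F 0 \<le> F (ts 0)" "G 0 \<le> G (ts 0)"
      using mono_onD[OF F] mono_onD[OF G] ts[of 0] ts[of n] \<open>0 \<le> T\<close> by auto
    then show ?thesis by linarith
  qed
  finally show "(\<Sum>i<n. \<bar>F (ts (Suc i)) - G (ts (Suc i)) - (F (ts i) - G (ts i))\<bar>) \<le> (F T - F 0) + (G T - G 0)" .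
qed

lemma emeasure_LS_measure_Ioc:
  assumes "Ifun T F" "0 \<le> T" "p \<le> q"
  shows "emeasure (LS_measure T F) {p<..q} = ennreal (F (max 0 (min T q)) - F (max 0 (min T p)))"
proof -
  have mono: "mono_on {0..T} F" and cont: "continuous_on {0..T} F"
    using assms(1) unfolding Ifun_def Cfun_def by auto
  define G where "G = (\<lambda>u. F (max 0 (min T u)))"
  have "G x \<le> G y" if "x \<le> y" for x y
    unfolding G_def by (rule mono_onD[OF mono]) (use that \<open>0 \<le> T\<close> in auto)
  moreover have "continuous_on UNIV G"
    unfolding G_def by (rule continuous_on_compose2[OF cont]) (use \<open>0 \<le> T\<close> in \<open>auto intro!: continuous_intros\<close>)
  then have "continuous (at_right a) G" for a
    by (simp add: continuous_on_eq_continuous_at continuous_at_imp_continuous_within)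
  ultimately show ?thesis
    using emeasure_interval_measure_Ioc_eq[of G p q] \<open>p \<le> q\<close> by (simp add: LS_measure_def G_def)
qed

lemma LS_measure_null_if_locally_const:
  assumes "Ifun T F" "0 \<le> T" "A \<subseteq> {0..T}"
    and loc: "\<And>u. u \<in> A \<Longrightarrow> \<exists>\<epsilon>>0. \<forall>v\<in>{0..T}. \<bar>v - u\<bar> < \<epsilon> \<longrightarrow> F v = F u"
  shows "(\<integral>\<^sup>+u. indicator A u \<partial>LS_measure T F) = 0"
proof -
  define G where "G u = F (max 0 (min T u))" for u
  \<comment> \<open>A is covered by countably many rational intervals on which the distribution function is flat.\<close>
  define J where "J = {pq \<in> \<rat> \<times> \<rat>. fst pq \<le> snd pq \<and> G (fst pq) = G (snd pq)}"
  define U where "U = (\<Union>pq\<in>J. {fst pq<..snd pq})"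
  have "countable J"
    by (rule countable_subset[of J "\<rat> \<times> \<rat>"]) (auto simp: J_def countable_rat)
  moreover have "{fst pq<..snd pq} \<in> null_sets (LS_measure T F)" if "pq \<in> J" for pq
  proof (rule null_setsI)
    show "emeasure (LS_measure T F) {fst pq<..snd pq} = 0"
      using emeasure_LS_measure_Ioc[OF assms(1,2), of "fst pq" "snd pq"] that by (simp add: J_def G_def)
  qed (simp add: LS_measure_def)
  ultimately have U: "U \<in> null_sets (LS_measure T F)"
    unfolding U_def by (rule null_sets_UN')
  have "A \<subseteq> U"
  proof
    fix u assume "u \<in> A"
    then obtain \<epsilon> where "\<epsilon> > 0" and \<epsilon>: "\<And>v. v \<in> {0..T} \<Longrightarrow> \<bar>v - u\<bar> < \<epsilon> \<Longrightarrow> F v = F u"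
      using loc by blast
    obtain p q where pq: "p \<in> \<rat>" "q \<in> \<rat>" "u - \<epsilon> < p" "p < u" "u < q" "q < u + \<epsilon>"
      using Rats_dense_in_real[of "u - \<epsilon>" u] Rats_dense_in_real[of u "u + \<epsilon>"] \<open>\<epsilon> > 0\<close> by auto
    have "u \<in> {0..T}" using \<open>u \<in> A\<close> assms(3) by auto
    have clamp: "F (max 0 (min T v)) = F u" if "\<bar>v - u\<bar> < \<epsilon>" for v
      by (rule \<epsilon>) (use that \<open>0 \<le> T\<close> \<open>u \<in> {0..T}\<close> in \<open>auto simp: abs_less_iff\<close>)
    have "G p = F u" "G q = F u"
      unfolding G_def using clamp[of p] clamp[of q] pq by (auto simp: abs_less_iff)
    then have "(p, q) \<in> J" using pq by (auto simp: J_def)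
    then show "u \<in> U" unfolding U_def using pq by force
  qed
  have "(\<integral>\<^sup>+u. indicator A u \<partial>LS_measure T F) \<le> (\<integral>\<^sup>+u. indicator U u \<partial>LS_measure T F)"
    using \<open>A \<subseteq> U\<close> by (intro nn_integral_mono) (auto simp: indicator_def)
  also have "\<dots> = 0" using U by (subst nn_integral_indicator) auto
  finally show ?thesis by simp
qed

lemma LS_measure_null_imp_const:
  assumes I: "Ifun T F" and "0 \<le> T" and null: "(\<integral>\<^sup>+u. indicator A u \<partial>LS_measure T F) = 0"
    and "0 \<le> \<alpha>" "\<alpha> \<le> \<beta>" "\<beta> \<le> T" and A: "\<And>u. \<alpha> < u \<Longrightarrow> u < \<beta> \<Longrightarrow> u \<in> A"
  shows "F \<alpha> = F \<beta>"
proof (cases "\<alpha> = \<beta>")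
  case False
  have mono: "mono_on {0..T} F" and cont: "continuous_on {0..T} F"
    using I unfolding Ifun_def Cfun_def by auto
  have flat: "F \<beta>' = F \<alpha>" if "\<beta>' \<in> {\<alpha>..<\<beta>}" for \<beta>'
  proof -
    have "ennreal (F \<beta>' - F \<alpha>) = emeasure (LS_measure T F) {\<alpha><..\<beta>'}"
      using emeasure_LS_measure_Ioc[OF I \<open>0 \<le> T\<close>, of \<alpha> \<beta>'] that assms(4-6) by simp
    also have "\<dots> = (\<integral>\<^sup>+u. indicator {\<alpha><..\<beta>'} u \<partial>LS_measure T F)"
      by (simp add: LS_measure_def)
    also have "\<dots> \<le> (\<integral>\<^sup>+u. indicator A u \<partial>LS_measure T F)"
      by (rule nn_integral_mono) (use A that in \<open>auto simp: indicator_def\<close>)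
    finally have "F \<beta>' - F \<alpha> \<le> 0" using null by (simp add: ennreal_eq_0_iff)
    moreover have "F \<alpha> \<le> F \<beta>'" by (rule mono_onD[OF mono]) (use that assms(4-6) in auto)
    ultimately show ?thesis by simp
  qed
  have "{\<alpha>..\<beta>} \<subseteq> {0..T}" using assms(4,6) by auto
  moreover have "closure {\<alpha>..<\<beta>} = {\<alpha>..\<beta>}" using False assms(5) by simp
  ultimately have "continuous_on (closure {\<alpha>..<\<beta>}) F" using continuous_on_subset[OF cont] by simp
  then have "F \<beta> = F \<alpha>"
  proof (rule continuous_constant_on_closure)
    show "\<beta> \<in> closure {\<alpha>..<\<beta>}" using \<open>closure {\<alpha>..<\<beta>} = {\<alpha>..\<beta>}\<close> assms(5) by simp
  qed (rule flat)
  then show ?thesis by simp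
qed simp

lemma flat_where_locally_const:
  fixes \<phi> \<psi> :: "real \<Rightarrow> real"
  assumes "continuous_on {\<tau>..\<tau>1} \<phi>" "continuous_on {\<tau>..\<tau>1} \<psi>"
    and flat: "flat_where (\<lambda>u. \<phi> u < \<psi> u) \<tau> \<tau>1 F" and u: "u \<in> {\<tau>..\<tau>1}" "\<phi> u < \<psi> u"
  shows "\<exists>\<epsilon>>0. \<forall>v\<in>{\<tau>..\<tau>1}. \<bar>v - u\<bar> < \<epsilon> \<longrightarrow> F v = F u"
proof -
  have "continuous_on {\<tau>..\<tau>1} (\<lambda>v. \<psi> v - \<phi> v)" using assms(1,2) by (intro continuous_intros)
  then obtain d where "d > 0" and d: "\<And>v. v \<in> {\<tau>..\<tau>1} \<Longrightarrow> \<bar>v - u\<bar> < d \<Longrightarrow> \<bar>(\<psi> v - \<phi> v) - (\<psi> u - \<phi> u)\<bar> < \<psi> u - \<phi> u"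
    using u unfolding continuous_on_iff dist_real_def by (metis diff_gt_0_iff_gt)
  have "F v = F u" if "v \<in> {\<tau>..\<tau>1}" "\<bar>v - u\<bar> < d" for v
  proof -
    have "\<phi> w < \<psi> w" if "w \<in> {min u v..max u v}" for w
    proof -
      have "w \<in> {\<tau>..\<tau>1}" "\<bar>w - u\<bar> < d"
        using that \<open>v \<in> {\<tau>..\<tau>1}\<close> \<open>\<bar>v - u\<bar> < d\<close> u(1) by (auto simp: min_def max_def abs_less_iff split: if_splits)
      then show ?thesis using d[of w] by (simp add: abs_less_iff)
    qed
    then show ?thesis
      using flat_whereD[OF flat, of "min u v" "max u v"] that u(1) by (cases "u \<le> v") auto
  qed
  then show ?thesis using \<open>d > 0\<close> by blast
qed

lemma LS_measure_null_where_flat: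
  fixes \<phi> \<psi> :: "real \<Rightarrow> real"
  assumes "Ifun T F" "0 \<le> T" "continuous_on {0..T} \<phi>" "continuous_on {0..T} \<psi>"
    and "flat_where (\<lambda>u. \<phi> u < \<psi> u) 0 T F"
  shows "(\<integral>\<^sup>+u. indicator {u \<in> {0..T}. \<phi> u < \<psi> u} u \<partial>LS_measure T F) = 0"
  using assms by (intro LS_measure_null_if_locally_const flat_where_locally_const) auto

section \<open>Existence and uniqueness for the backward Skorokhod problem\<close>

lemma BSP_solution_of_backward_reflection:
  assumes "0 \<le> T" and lo: "continuous_on {0..T} lo" and hi: "continuous_on {0..T} hi"
    and l_sign: "\<And>t y. t \<in> {0..T} \<Longrightarrow> (l t y \<le> 0 \<longleftrightarrow> y \<le> hi t) \<and> (l t y < 0 \<longleftrightarrow> y < hi t)"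
    and r_sign: "\<And>t y. t \<in> {0..T} \<Longrightarrow> (0 \<le> r t y \<longleftrightarrow> lo t \<le> y) \<and> (0 < r t y \<longleftrightarrow> lo t < y)"
    and refl: "backward_reflection lo hi s 0 T a x R L"
  shows "BSP_solution T l r s a x (\<lambda>t. (R 0 - R t) - (L 0 - L t))"
proof -
  note D = refl[unfolded backward_reflection_def]
  define kr where "kr t = R 0 - R t" for t
  define kl where "kl t = L 0 - L t" for t
  have mono: "mono_on {0..T} kr" "mono_on {0..T} kl"
    using D by (auto simp: kr_def kl_def mono_on_def monotone_on_def)
  have I: "Ifun T kr" "Ifun T kl"
    using D mono by (auto simp: Ifun_def Cfun_def kr_def kl_def intro!: continuous_intros)
  have "flat_where (\<lambda>u. lo u < x u) 0 T kr" "flat_where (\<lambda>u. x u < hi u) 0 T kl"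
    using D by (auto simp: flat_where_def kr_def kl_def)
  moreover have "continuous_on {0..T} x" using D by blast
  ultimately have null: "(\<integral>\<^sup>+u. indicator {u \<in> {0..T}. lo u < x u} u \<partial>LS_measure T kr) = 0"
    "(\<integral>\<^sup>+u. indicator {u \<in> {0..T}. x u < hi u} u \<partial>LS_measure T kl) = 0"
    using LS_measure_null_where_flat[OF I(1) \<open>0 \<le> T\<close> lo] LS_measure_null_where_flat[OF I(2) \<open>0 \<le> T\<close> _ hi]
    by blast+
  have contact: "{u \<in> {0..T}. r u (x u) > 0} = {u \<in> {0..T}. lo u < x u}"
    "{u \<in> {0..T}. l u (x u) < 0} = {u \<in> {0..T}. x u < hi u}"
    using l_sign r_sign by auto
  have "BSP_solution T l r s a x (\<lambda>t. kr t - kl t)"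
    unfolding BSP_solution_def BVfun_def Cfun_def
  proof (intro conjI ballI)
    show "continuous_on {0..T} x" using D by blast
    show "continuous_on {0..T} (\<lambda>t. kr t - kl t)" using I by (auto simp: Ifun_def Cfun_def intro: continuous_intros)
    show "kr 0 - kl 0 = 0" by (simp add: kr_def kl_def)
    show "bounded_var T (\<lambda>t. kr t - kl t)" by (rule bounded_var_diff_mono[OF mono \<open>0 \<le> T\<close>])
    fix t assume t: "t \<in> {0..T}"
    show "x t = a + s T - s t + (kr T - kl T) - (kr t - kl t)"
      using backward_reflection_at(1)[OF refl t] D by (simp add: kr_def kl_def)
    show "l t (x t) \<le> 0" "0 \<le> r t (x t)"
      using backward_reflection_at(2,3)[OF refl t] l_sign[OF t] r_sign[OF t] by auto
  next
    show "\<exists>kr' kl'. Ifun T kr' \<and> Ifun T kl' \<and> (\<forall>t\<in>{0..T}. kr t - kl t = kr' t - kl' t) \<and>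
        (\<integral>\<^sup>+u. indicator {u \<in> {0..T}. l u (x u) < 0} u \<partial>LS_measure T kl') = 0 \<and>
        (\<integral>\<^sup>+u. indicator {u \<in> {0..T}. r u (x u) > 0} u \<partial>LS_measure T kr') = 0"
      using I null unfolding contact by blast
  qed
  moreover have "(\<lambda>t. kr t - kl t) = (\<lambda>t. (R 0 - R t) - (L 0 - L t))" by (simp add: kr_def kl_def)
  ultimately show ?thesis by simp
qed

lemma BSP_solutionE:
  assumes "BSP_solution T l r s a x k"
  obtains kr kl where "continuous_on {0..T} x" "k 0 = 0"
    "\<And>t. t \<in> {0..T} \<Longrightarrow> x t = a + s T - s t + k T - k t"
    "\<And>t. t \<in> {0..T} \<Longrightarrow> l t (x t) \<le> 0 \<and> 0 \<le> r t (x t)"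
    "Ifun T kr" "Ifun T kl" "\<And>t. t \<in> {0..T} \<Longrightarrow> k t = kr t - kl t"
    "(\<integral>\<^sup>+u. indicator {u \<in> {0..T}. l u (x u) < 0} u \<partial>LS_measure T kl) = 0"
    "(\<integral>\<^sup>+u. indicator {u \<in> {0..T}. r u (x u) > 0} u \<partial>LS_measure T kr) = 0"
  using assms unfolding BSP_solution_def BVfun_def Cfun_def by blast

lemma first_nonpos_point:
  fixes f :: "real \<Rightarrow> real"
  assumes "continuous_on {t1..T} f" "t1 \<le> T" "f T \<le> 0"
  obtains t0 where "t1 \<le> t0" "t0 \<le> T" "f t0 \<le> 0" "\<And>u. t1 \<le> u \<Longrightarrow> u < t0 \<Longrightarrow> 0 < f u"
proof -
  define S where "S = {t1..T} \<inter> f -` {..0}"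
  have "closed S" unfolding S_def using assms(1) by (rule continuous_closed_preimage) auto
  moreover have "T \<in> S" "bdd_below S" using assms(2,3) by (auto simp: S_def)
  ultimately have "Inf S \<in> S" using closed_contains_Inf by blast
  moreover have "0 < f u" if "t1 \<le> u" "u < Inf S" for u
    using cInf_lower[OF _ \<open>bdd_below S\<close>, of u] that \<open>Inf S \<in> S\<close> by (force simp: S_def)
  ultimately show thesis using that unfolding S_def by auto
qed

lemma BSP_solution_le:
  assumes mono: "\<And>t. t \<in> {0..T} \<Longrightarrow> strict_mono (l t) \<and> strict_mono (r t)"
    and S: "BSP_solution T l r s a x k" and S': "BSP_solution T l r s a x' k'"
    and t1: "t1 \<in> {0..T}"
  shows "x t1 \<le> x' t1"
proof (rule ccontr)
  assume "\<not> x t1 \<le> x' t1"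
  obtain kr kl where cx: "continuous_on {0..T} x" and "k 0 = 0"
    and x: "\<And>t. t \<in> {0..T} \<Longrightarrow> x t = a + s T - s t + k T - k t"
    and bx: "\<And>t. t \<in> {0..T} \<Longrightarrow> l t (x t) \<le> 0 \<and> 0 \<le> r t (x t)"
    and I: "Ifun T kr" "Ifun T kl" and k: "\<And>t. t \<in> {0..T} \<Longrightarrow> k t = kr t - kl t"
    and "(\<integral>\<^sup>+u. indicator {u \<in> {0..T}. l u (x u) < 0} u \<partial>LS_measure T kl) = 0"
    and null: "(\<integral>\<^sup>+u. indicator {u \<in> {0..T}. r u (x u) > 0} u \<partial>LS_measure T kr) = 0"
    using BSP_solutionE[OF S] by blast
  obtain kr' kl' where cx': "continuous_on {0..T} x'" and "k' 0 = 0"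
    and x': "\<And>t. t \<in> {0..T} \<Longrightarrow> x' t = a + s T - s t + k' T - k' t"
    and bx': "\<And>t. t \<in> {0..T} \<Longrightarrow> l t (x' t) \<le> 0 \<and> 0 \<le> r t (x' t)"
    and I': "Ifun T kr'" "Ifun T kl'" and k': "\<And>t. t \<in> {0..T} \<Longrightarrow> k' t = kr' t - kl' t"
    and null': "(\<integral>\<^sup>+u. indicator {u \<in> {0..T}. l u (x' u) < 0} u \<partial>LS_measure T kl') = 0"
    and "(\<integral>\<^sup>+u. indicator {u \<in> {0..T}. r u (x' u) > 0} u \<partial>LS_measure T kr') = 0"
    using BSP_solutionE[OF S'] by blast
  have "continuous_on {t1..T} (\<lambda>t. x t - x' t)"
    using t1 by (intro continuous_intros continuous_on_subset[OF cx] continuous_on_subset[OF cx']) auto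
  moreover have "x T = x' T" using x[of T] x'[of T] t1 by auto
  ultimately obtain t0 where t0: "t1 \<le> t0" "t0 \<le> T" "x t0 \<le> x' t0"
    and above: "\<And>u. t1 \<le> u \<Longrightarrow> u < t0 \<Longrightarrow> x' u < x u"
    using first_nonpos_point[of t1 T "\<lambda>t. x t - x' t"] t1 by auto
  have u_in: "u \<in> {0..T}" if "t1 < u" "u < t0" for u using that t1 t0 by auto
  \<comment> \<open>On (t1, t0) the solution x stays strictly above x', so kr and kl' cannot increase there.\<close>
  have "kr t1 = kr t0"
  proof (rule LS_measure_null_imp_const[OF I(1) _ null])
    fix u assume u: "t1 < u" "u < t0"
    have "r u (x' u) < r u (x u)" using mono[OF u_in[OF u]] above[of u] u by (simp add: strict_mono_less)
    then show "u \<in> {u \<in> {0..T}. r u (x u) > 0}" using bx'[OF u_in[OF u]] u_in[OF u] by auto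
  qed (use t1 t0 in auto)
  moreover have "kl' t1 = kl' t0"
  proof (rule LS_measure_null_imp_const[OF I'(2) _ null'])
    fix u assume u: "t1 < u" "u < t0"
    have "l u (x' u) < l u (x u)" using mono[OF u_in[OF u]] above[of u] u by (simp add: strict_mono_less)
    then show "u \<in> {u \<in> {0..T}. l u (x' u) < 0}" using bx[OF u_in[OF u]] u_in[OF u] by auto
  qed (use t1 t0 in auto)
  moreover have "kl t1 \<le> kl t0" "kr' t1 \<le> kr' t0"
    using I(2) I'(1) t1 t0 unfolding Ifun_def by (auto intro: mono_onD)
  moreover have "t0 \<in> {0..T}" using t1 t0 by auto
  ultimately have "x t1 - x' t1 \<le> x t0 - x' t0"
    using x[of t1] x[of t0] x'[of t1] x'[of t0] k[of t1] k[of t0] k'[of t1] k'[of t0] t1 by simp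
  then show False using \<open>\<not> x t1 \<le> x' t1\<close> t0(3) by simp
qed

lemma BSP_solution_unique:
  assumes mono: "\<And>t. t \<in> {0..T} \<Longrightarrow> strict_mono (l t) \<and> strict_mono (r t)"
    and S: "BSP_solution T l r s a x k" and S': "BSP_solution T l r s a x' k'"
    and "t \<in> {0..T}"
  shows "x t = x' t \<and> k t = k' t"
proof -
  have x_eq: "x u = x' u" if "u \<in> {0..T}" for u
    using BSP_solution_le[OF mono S S' that] BSP_solution_le[OF mono S' S that] by simp
  have x_eq0: "\<And>u. u \<in> {0..T} \<Longrightarrow> x u = a + s T - s u + k T - k u" and "k 0 = 0"
    using S unfolding BSP_solution_def BVfun_def by blast+
  have x_eq0': "\<And>u. u \<in> {0..T} \<Longrightarrow> x' u = a + s T - s u + k' T - k' u" and "k' 0 = 0"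
    using S' unfolding BSP_solution_def BVfun_def by blast+
  have "0 \<in> {0..T}" using \<open>t \<in> {0..T}\<close> by auto
  then have "k T = k' T"
    using x_eq0[of 0] x_eq0'[of 0] x_eq[of 0] \<open>k 0 = 0\<close> \<open>k' 0 = 0\<close> by simp
  then show ?thesis using x_eq0[OF \<open>t \<in> {0..T}\<close>] x_eq0'[OF \<open>t \<in> {0..T}\<close>] x_eq[OF \<open>t \<in> {0..T}\<close>] by simp
qed

theorem mainTheorem1:
  fixes T :: real and l r :: "real \<Rightarrow> real \<Rightarrow> real"
  assumes "T > 0" and "assumptionA T l r"
    and "Cfun T s" and "l T a \<le> 0" and "0 \<le> r T a"
  shows "(\<exists>x k. BSP_solution T l r s a x k) \<and>
         (\<forall>x k x' k'. BSP_solution T l r s a x k \<and> BSP_solution T l r s a x' k' \<longrightarrow>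
            (\<forall>t\<in>{0..T}. x t = x' t \<and> k t = k' t))"
proof -
  obtain lo hi \<eta> where lo: "continuous_on {0..T} lo" and hi: "continuous_on {0..T} hi"
    and "\<eta> > 0" and width: "\<And>t. t \<in> {0..T} \<Longrightarrow> \<eta> \<le> hi t - lo t"
    and l_sign: "\<And>t y. t \<in> {0..T} \<Longrightarrow> (l t y \<le> 0 \<longleftrightarrow> y \<le> hi t) \<and> (l t y < 0 \<longleftrightarrow> y < hi t)"
    and r_sign: "\<And>t y. t \<in> {0..T} \<Longrightarrow> (0 \<le> r t y \<longleftrightarrow> lo t \<le> y) \<and> (0 < r t y \<longleftrightarrow> lo t < y)"
    using assumptionA_barriers[OF assms(2)] by blast
  have "0 \<le> T" "T \<in> {0..T}" using \<open>T > 0\<close> by auto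
  then have "lo T \<le> a" "a \<le> hi T" using l_sign r_sign assms(4,5) by auto
  then obtain x R L where "backward_reflection lo hi s 0 T a x R L"
    using backward_reflection_exists[OF lo hi assms(3)[unfolded Cfun_def] \<open>\<eta> > 0\<close> width \<open>0 \<le> T\<close>] by blast
  then have "BSP_solution T l r s a x (\<lambda>t. (R 0 - R t) - (L 0 - L t))"
    using BSP_solution_of_backward_reflection[OF \<open>0 \<le> T\<close> lo hi l_sign r_sign] by blast
  moreover have "\<And>t. t \<in> {0..T} \<Longrightarrow> strict_mono (l t) \<and> strict_mono (r t)"
    using assms(2) unfolding assumptionA_def by blast
  ultimately show ?thesis using BSP_solution_unique by blast
qed

end
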